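(* Let $(V,\nu)$ be a strongly complete PN-space, $(W,\mu)$ a PN-space, and $(T_n)_{n\ge1}$ a sequence in $B(V,W)$ such that for every $x\in V$ the sequence $(T_nx)_{n\ge1}$ converges strongly in $W$. Define $T:V\to W$ by $Tx=\lim_{n\to\infty}T_nx$ (strong limit). Then $T$ is linear and $T\in B(V,W)$.
   Context: A distance distribution function is a map $F:[-\infty,+\infty]\to[0,1]$ that is nondecreasing, left-continuous on $\mathbb{R}$, with $F(-\infty)=0$, $F(+\infty)=1$ and $F(0)=0$; the set of these is $\Delta^+$. $\mathcal{D}^+\subseteq\Delta^+$ denotes the proper ones, i.e. those with $\lim_{x\to+\infty}F(x)=1$. $H_0\in\Delta^+$ is $H_0(x)=0$ for $x\le 0$ and $H_0(x)=1$ for $x>0$. For $F,G\in\Delta^+$ let $\tau_M(F,G)(x)=\sup\{\min(F(s),G(t)) : s+t=x\}$. In this paper a PN-space $(V,\nu)$ is a real vector space $V$ with a map $\nu:V\to\Delta^+$, $p\mapsto\nu_p$, such that for all $p,q\in V$: $\nu_p=H_0$ iff $p=0$; $\nu_{p+q}\ge\tau_M(\nu_p,\nu_q)$ pointwise; and $\nu_{\alpha p}(x)=\nu_p(x/|\alpha|)$ for all real $\alpha\neq0$ and $x\ge 0$. Standing assumption: $\nu_p\in\mathcal{D}^+$ for every $p\in V$. For $x\in V$ and $w\in(0,1)$ put $\|x\|_w=\sup\{t\in\mathbb{R}:\nu_x(t)<w\}$; for each $w$ this is a norm on $V$, and $w\mapsto\|x\|_w$ is nondecreasing. The strong topology on $V$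 is generated by the neighbourhoods $N_p(t)=\{q\in V:\nu_{p-q}(t)>1-t\}$, $p\in V$, $t>0$; equivalently the balls $\{x:\|x-p\|_w<r\}$ form a basis for it. A sequence $(p_n)$ converges strongly to $p$ if for every $t>0$ one has $p_n\in N_p(t)$ for all large $n$; it is strongly Cauchy if for every $t>0$ there is $N$ with $\nu_{p_n-p_m}(t)>1-t$ for all $m,n>N$. $(V,\nu)$ is strongly complete if every strongly Cauchy sequence converges strongly. $B(V,W)$ denotes the set of linear operators $V\to W$ that are continuous for the strong topologies. *)

theory Defs
  imports "HOL-Analysis.Analysis"
begin

text \<open>Distance distribution functions are represented by their restriction to the
real line (type real \<Rightarrow> real); the values at -\<infinity> and +\<infinity> are fixed
(0 and 1) by definition and so carry no information.\<close>

definition ddf :: "(real \<Rightarrow> real) \<Rightarrow> bool" where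
  "ddf F \<longleftrightarrow> mono F \<and> (\<forall>x. 0 \<le> F x \<and> F x \<le> 1)
      \<and> (\<forall>x. continuous (at_left x) F) \<and> F 0 = 0"

definition proper_ddf :: "(real \<Rightarrow> real) \<Rightarrow> bool" where
  "proper_ddf F \<longleftrightarrow> ddf F \<and> (F \<longlongrightarrow> 1) at_top"

definition H0 :: "real \<Rightarrow> real" where
  "H0 x = (if x \<le> 0 then 0 else 1)"

definition tauM :: "(real \<Rightarrow> real) \<Rightarrow> (real \<Rightarrow> real) \<Rightarrow> real \<Rightarrow> real" where
  "tauM F G x = Sup {min (F s) (G t) | s t. s + t = x}"

text \<open>PN-space, including the standing assumption that every \<nu>_p is proper.\<close>
definition pn_space :: "('v::real_vector \<Rightarrow> real \<Rightarrow> real) \<Rightarrow> bool" where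
  "pn_space \<nu> \<longleftrightarrow>
     (\<forall>p. ddf (\<nu> p) \<and> proper_ddf (\<nu> p))
   \<and> (\<forall>p. \<nu> p = H0 \<longleftrightarrow> p = 0)
   \<and> (\<forall>p q x. tauM (\<nu> p) (\<nu> q) x \<le> \<nu> (p + q) x)
   \<and> (\<forall>\<alpha> p x. \<alpha> \<noteq> 0 \<and> x \<ge> 0 \<longrightarrow> \<nu> (\<alpha> *\<^sub>R p) x = \<nu> p (x / \<bar>\<alpha>\<bar>))"

definition strong_nbhd :: "('v::real_vector \<Rightarrow> real \<Rightarrow> real) \<Rightarrow> 'v \<Rightarrow> real \<Rightarrow> 'v set" where
  "strong_nbhd \<nu> p t = {q. \<nu> (p - q) t > 1 - t}"

definition strong_open :: "('v::real_vector \<Rightarrow> real \<Rightarrow> real) \<Rightarrow> 'v set \<Rightarrow> bool" where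
  "strong_open \<nu> U \<longleftrightarrow> (\<forall>p\<in>U. \<exists>t>0. strong_nbhd \<nu> p t \<subseteq> U)"

definition strong_continuous ::
  "('v::real_vector \<Rightarrow> real \<Rightarrow> real) \<Rightarrow> ('w::real_vector \<Rightarrow> real \<Rightarrow> real) \<Rightarrow> ('v \<Rightarrow> 'w) \<Rightarrow> bool" where
  "strong_continuous \<nu> \<mu> f \<longleftrightarrow> (\<forall>U. strong_open \<mu> U \<longrightarrow> strong_open \<nu> (f -` U))"

definition strong_conv :: "('v::real_vector \<Rightarrow> real \<Rightarrow> real) \<Rightarrow> (nat \<Rightarrow> 'v) \<Rightarrow> 'v \<Rightarrow> bool" where
  "strong_conv \<nu> s p \<longleftrightarrow> (\<forall>t>0. eventually (\<lambda>n. s n \<in> strong_nbhd \<nu> p t) sequentially)"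

definition strong_cauchy :: "('v::real_vector \<Rightarrow> real \<Rightarrow> real) \<Rightarrow> (nat \<Rightarrow> 'v) \<Rightarrow> bool" where
  "strong_cauchy \<nu> s \<longleftrightarrow> (\<forall>t>0. \<exists>N. \<forall>m n. m > N \<and> n > N \<longrightarrow> \<nu> (s n - s m) t > 1 - t)"

definition strongly_complete :: "('v::real_vector \<Rightarrow> real \<Rightarrow> real) \<Rightarrow> bool" where
  "strongly_complete \<nu> \<longleftrightarrow> (\<forall>s. strong_cauchy \<nu> s \<longrightarrow> (\<exists>p. strong_conv \<nu> s p))"

definition bounded_ops ::
  "('v::real_vector \<Rightarrow> real \<Rightarrow> real) \<Rightarrow> ('w::real_vector \<Rightarrow> real \<Rightarrow> real) \<Rightarrow> ('v \<Rightarrow> 'w) set" where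
  "bounded_ops \<nu> \<mu> = {f. linear f \<and> strong_continuous \<nu> \<mu> f}"

end

theory Submission
  imports Defs
begin

(* The gauge |p| = inf {h > 0. \<nu>_p(h) > 1 - h}, i.e. the modified Levy distance of \<nu>_p from H0,
   vanishes only at 0, is symmetric and subadditive, satisfies |c p| \<le> max 1 |c| |p|, and its balls
   are exactly the strong neighbourhoods. So the strong topology is that of the translation-invariant
   metric |p - q|, which is complete on V, and strong limits are metric limits; linearity of T passes
   to the limit. For continuity, the closed sets {x. |T_n x - T_k x| \<le> r for all n, k \<ge> N} cover V,
   so by Baire one of them contains a ball. Translating it to 0 by linearity, T_n - T_N is uniformly
   small near 0 for all n \<ge> N, and continuity of T_N at 0 gives continuity of T at 0. *)

definition pn_gauge :: "('v::real_vector \<Rightarrow> real \<Rightarrow> real) \<Rightarrow> 'v \<Rightarrow> real" where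
  "pn_gauge \<nu> x = Inf {h. 0 < h \<and> 1 - h < \<nu> x h}"

locale PN_space =
  fixes \<nu> :: "'v::real_vector \<Rightarrow> real \<Rightarrow> real"
  assumes pn_space: "pn_space \<nu>"
begin

lemma ddf_distr: "ddf (\<nu> p)"
  using pn_space by (simp add: pn_space_def)

lemma distr_mono: "s \<le> t \<Longrightarrow> \<nu> p s \<le> \<nu> p t"
  using ddf_distr by (simp add: ddf_def monoD)

lemma distr_nonneg: "0 \<le> \<nu> p t"
  using ddf_distr by (simp add: ddf_def)

lemma distr_le_1: "\<nu> p t \<le> 1"
  using ddf_distr by (simp add: ddf_def)

lemma distr_eq_0_if_nonpos: "t \<le> 0 \<Longrightarrow> \<nu> p t = 0"
  using ddf_distr distr_mono[of t 0 p] distr_nonneg[of p t] by (simp add: ddf_def)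

lemma distr_tendsto_at_left: "(\<nu> p \<longlongrightarrow> \<nu> p t) (at_left t)"
  using ddf_distr by (simp add: ddf_def continuous_within)

lemma distr_eq_H0_iff: "\<nu> p = H0 \<longleftrightarrow> p = 0"
  using pn_space by (simp add: pn_space_def)

lemma distr_tauM_le: "tauM (\<nu> p) (\<nu> q) x \<le> \<nu> (p + q) x"
  using pn_space by (simp add: pn_space_def)

lemma distr_scaleR: "\<alpha> \<noteq> 0 \<Longrightarrow> 0 \<le> x \<Longrightarrow> \<nu> (\<alpha> *\<^sub>R p) x = \<nu> p (x / \<bar>\<alpha>\<bar>)"
  using pn_space unfolding pn_space_def by blast

lemma distr_min_le_add: "min (\<nu> p s) (\<nu> q t) \<le> \<nu> (p + q) (s + t)"
proof -
  have "min (\<nu> p s) (\<nu> q t) \<le> tauM (\<nu> p) (\<nu> q) (s + t)"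
    unfolding tauM_def
  proof (rule cSup_upper)
    show "bdd_above {min (\<nu> p s') (\<nu> q t') |s' t'. s' + t' = s + t}"
      by (rule bdd_aboveI[of _ 1]) (auto intro: min.coboundedI1 distr_le_1)
  qed blast
  then show ?thesis using distr_tauM_le order_trans by blast
qed

lemma distr_minus: "\<nu> (- p) = \<nu> p"
proof
  fix t
  show "\<nu> (- p) t = \<nu> p t"
  proof (cases "0 \<le> t")
    case True
    then show ?thesis using distr_scaleR[of "-1" t p] by simp
  qed (simp add: distr_eq_0_if_nonpos)
qed

lemma gauge_set_nonempty: "{h. 0 < h \<and> 1 - h < \<nu> p h} \<noteq> {}"
proof -
  have "2 \<in> {h. 0 < h \<and> 1 - h < \<nu> p h}"
    using distr_nonneg[of p 2] by simp
  then show ?thesis by (metis empty_iff)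
qed

lemma gauge_nonneg: "0 \<le> pn_gauge \<nu> p"
  unfolding pn_gauge_def by (rule cInf_greatest[OF gauge_set_nonempty]) simp

lemma gauge_less_iff: "pn_gauge \<nu> p < t \<longleftrightarrow> 1 - t < \<nu> p t"
proof
  assume "pn_gauge \<nu> p < t"
  then obtain h where h: "0 < h" "1 - h < \<nu> p h" "h < t"
    unfolding pn_gauge_def using cInf_lessD[OF gauge_set_nonempty] by blast
  then show "1 - t < \<nu> p t" using distr_mono[of h t p] by auto
next
  assume t: "1 - t < \<nu> p t"
  then have "0 < t" using distr_eq_0_if_nonpos[of t p] by force
  have "((\<lambda>h. \<nu> p h - (1 - h)) \<longlongrightarrow> \<nu> p t - (1 - t)) (at_left t)"
    by (intro tendsto_intros distr_tendsto_at_left)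
  then have "\<forall>\<^sub>F h in at_left t. 0 < \<nu> p h - (1 - h)"
    using t by (intro order_tendstoD) auto
  moreover have "\<forall>\<^sub>F h in at_left t. h \<in> {0<..<t}"
    using \<open>0 < t\<close> by (rule eventually_at_left_real)
  ultimately have "\<forall>\<^sub>F h in at_left t. 0 < \<nu> p h - (1 - h) \<and> h \<in> {0<..<t}"
    by (rule eventually_conj)
  then obtain h where h: "1 - h < \<nu> p h" "0 < h" "h < t"
    by (auto dest: eventually_happens'[OF trivial_limit_at_left_real])
  have "pn_gauge \<nu> p \<le> h"
    unfolding pn_gauge_def by (rule cInf_lower) (use h in \<open>auto intro: bdd_belowI[of _ 0]\<close>)
  then show "pn_gauge \<nu> p < t" using h by simp
qed

lemma gauge_le_iff: "pn_gauge \<nu> p \<le> a \<longleftrightarrow> (\<forall>t>a. 1 - t < \<nu> p t)"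
  unfolding gauge_less_iff[symmetric] by (meson dense_ge le_less_trans less_imp_le)

lemma gauge_eq_0_iff: "pn_gauge \<nu> p = 0 \<longleftrightarrow> p = 0"
proof
  assume "pn_gauge \<nu> p = 0"
  then have small: "1 - s < \<nu> p s" if "0 < s" for s
    using gauge_le_iff that by force
  have "\<nu> p t = H0 t" for t
  proof (cases "t \<le> 0")
    case False
    have "1 \<le> \<nu> p t"
    proof (rule field_le_epsilon)
      fix e :: real assume "0 < e"
      then have "1 - min t e < \<nu> p t"
        using small[of "min t e"] distr_mono[of "min t e" t p] False by simp
      then show "1 \<le> \<nu> p t + e" by linarith
    qed
    then show ?thesis using distr_le_1[of p t] False by (simp add: H0_def)
  qed (simp add: distr_eq_0_if_nonpos H0_def)
  then show "p = 0" using distr_eq_H0_iff by blast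
next
  assume "p = 0"
  then have "\<nu> p = H0" using distr_eq_H0_iff by simp
  then have "pn_gauge \<nu> p \<le> 0" by (simp add: gauge_le_iff H0_def)
  then show "pn_gauge \<nu> p = 0" using gauge_nonneg antisym by blast
qed

lemma gauge_minus: "pn_gauge \<nu> (- p) = pn_gauge \<nu> p"
  by (simp add: pn_gauge_def distr_minus)

lemma gauge_add: "pn_gauge \<nu> (p + q) \<le> pn_gauge \<nu> p + pn_gauge \<nu> q"
proof (unfold gauge_le_iff, intro allI impI)
  fix t assume t: "pn_gauge \<nu> p + pn_gauge \<nu> q < t"
  define s where "s = pn_gauge \<nu> p + (t - pn_gauge \<nu> p - pn_gauge \<nu> q) / 2"
  have gp: "pn_gauge \<nu> p < s" using t by (simp add: s_def)
  have gq: "pn_gauge \<nu> q < t - s" using t by (simp add: s_def field_simps)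
  have "1 - s < \<nu> p s" "1 - (t - s) < \<nu> q (t - s)"
    using gp gq by (simp_all add: gauge_less_iff)
  moreover have "0 < s" using gp gauge_nonneg[of p] by linarith
  moreover have "0 < t - s" using gq gauge_nonneg[of q] by linarith
  ultimately have "1 - t < min (\<nu> p s) (\<nu> q (t - s))" by simp
  also have "\<dots> \<le> \<nu> (p + q) t" using distr_min_le_add[of p s q "t - s"] by simp
  finally show "1 - t < \<nu> (p + q) t" .
qed

lemma gauge_zero [simp]: "pn_gauge \<nu> 0 = 0"
  by (simp add: gauge_eq_0_iff)

lemma gauge_scaleR: "pn_gauge \<nu> (c *\<^sub>R p) \<le> max 1 \<bar>c\<bar> * pn_gauge \<nu> p"
proof (cases "c = 0")
  case True
  then show ?thesis using gauge_nonneg[of p] by simp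
next
  case False
  define K where "K = max 1 \<bar>c\<bar>"
  show ?thesis unfolding K_def[symmetric]
  proof (unfold gauge_le_iff, intro allI impI)
    fix t assume t: "K * pn_gauge \<nu> p < t"
    have K: "1 \<le> K" "\<bar>c\<bar> \<le> K" by (simp_all add: K_def)
    then have "pn_gauge \<nu> p < t / K" using t by (simp add: field_simps)
    then have "1 - t / K < \<nu> p (t / K)" by (simp add: gauge_less_iff)
    moreover have "0 \<le> K * pn_gauge \<nu> p" using K gauge_nonneg[of p] by simp
    then have "0 < t" using t by linarith
    then have "1 - t \<le> 1 - t / K" "t / K \<le> t / \<bar>c\<bar>"
      using K False by (simp_all add: divide_left_mono field_simps)
    moreover have "\<nu> (c *\<^sub>R p) t = \<nu> p (t / \<bar>c\<bar>)" using distr_scaleR False \<open>0 < t\<close> by simp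
    ultimately show "1 - t < \<nu> (c *\<^sub>R p) t" using distr_mono[of "t / K" "t / \<bar>c\<bar>" p] by linarith
  qed
qed

lemma gauge_minus_commute: "pn_gauge \<nu> (p - q) = pn_gauge \<nu> (q - p)"
  using gauge_minus[of "p - q"] by simp

lemma gauge_diff: "pn_gauge \<nu> (p - q) \<le> pn_gauge \<nu> p + pn_gauge \<nu> q"
  using gauge_add[of p "- q"] by (simp add: gauge_minus)

sublocale Metric_space UNIV "\<lambda>p q. pn_gauge \<nu> (p - q)"
proof
  fix p q r :: 'v
  show "0 \<le> pn_gauge \<nu> (p - q)" by (rule gauge_nonneg)
  show "pn_gauge \<nu> (p - q) = pn_gauge \<nu> (q - p)" by (rule gauge_minus_commute)
  show "pn_gauge \<nu> (p - q) = 0 \<longleftrightarrow> p = q" by (simp add: gauge_eq_0_iff)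
  show "pn_gauge \<nu> (p - r) \<le> pn_gauge \<nu> (p - q) + pn_gauge \<nu> (q - r)"
    using gauge_add[of "p - q" "q - r"] by simp
qed

lemma mball_eq_strong_nbhd: "mball p t = strong_nbhd \<nu> p t"
  by (auto simp: mball_def strong_nbhd_def gauge_less_iff)

lemma strong_open_iff_openin: "strong_open \<nu> U \<longleftrightarrow> openin mtopology U"
  by (simp add: strong_open_def openin_mtopology mball_eq_strong_nbhd Ball_def)

lemma strong_conv_iff_limitin: "strong_conv \<nu> s p \<longleftrightarrow> limitin mtopology s p sequentially"
  by (simp add: strong_conv_def limitin_metric strong_nbhd_def gauge_less_iff[symmetric]
      gauge_minus_commute[of p])

lemma mcomplete_if_strongly_complete:
  assumes "strongly_complete \<nu>"
  shows "mcomplete"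
  unfolding mcomplete_def
proof (intro allI impI)
  fix \<sigma> assume \<sigma>: "MCauchy \<sigma>"
  have "strong_cauchy \<nu> \<sigma>"
    unfolding strong_cauchy_def
  proof (intro allI impI)
    fix t :: real assume "0 < t"
    then obtain N where "\<forall>n n'. N \<le> n \<longrightarrow> N \<le> n' \<longrightarrow> pn_gauge \<nu> (\<sigma> n - \<sigma> n') < t"
      using \<sigma> by (auto simp: MCauchy_def)
    then show "\<exists>N. \<forall>m n. N < m \<and> N < n \<longrightarrow> 1 - t < \<nu> (\<sigma> n - \<sigma> m) t"
      by (metis gauge_less_iff less_imp_le)
  qed
  then show "\<exists>p. limitin mtopology \<sigma> p sequentially"
    using assms by (simp add: strongly_complete_def strong_conv_iff_limitin)
qed

lemma limitin_add:
  assumes "limitin mtopology f p F" and "limitin mtopology g q F"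
  shows "limitin mtopology (\<lambda>x. f x + g x) (p + q) F"
proof -
  have "((\<lambda>x. pn_gauge \<nu> (f x - p) + pn_gauge \<nu> (g x - q)) \<longlongrightarrow> 0) F"
    using tendsto_add[of _ 0 F _ 0] assms by (simp add: limitin_metric_dist_null)
  moreover have "pn_gauge \<nu> (f x + g x - (p + q)) \<le> pn_gauge \<nu> (f x - p) + pn_gauge \<nu> (g x - q)"
    for x
    using gauge_add[of "f x - p" "g x - q"] by (simp add: algebra_simps)
  ultimately show ?thesis
    unfolding limitin_metric_dist_null
    by (auto intro: tendsto_sandwich[of "\<lambda>_. 0", rotated 2] simp: gauge_nonneg)
qed

lemma limitin_scaleR:
  assumes "limitin mtopology f p F"
  shows "limitin mtopology (\<lambda>x. c *\<^sub>R f x) (c *\<^sub>R p) F"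
proof -
  have "((\<lambda>x. max 1 \<bar>c\<bar> * pn_gauge \<nu> (f x - p)) \<longlongrightarrow> 0) F"
    using tendsto_mult_right_zero assms by (simp add: limitin_metric_dist_null)
  moreover have "pn_gauge \<nu> (c *\<^sub>R f x - c *\<^sub>R p) \<le> max 1 \<bar>c\<bar> * pn_gauge \<nu> (f x - p)" for x
    using gauge_scaleR[of c "f x - p"] by (simp add: algebra_simps)
  ultimately show ?thesis
    unfolding limitin_metric_dist_null
    by (auto intro: tendsto_sandwich[of "\<lambda>_. 0", rotated 2] simp: gauge_nonneg)
qed

lemma linear_pointwise_limit:
  fixes f :: "nat \<Rightarrow> 'u::real_vector \<Rightarrow> 'v"
  assumes lin: "\<And>n. linear (f n)"
    and lim: "\<And>x. limitin mtopology (\<lambda>n. f n x) (g x) sequentially"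
  shows "linear g"
proof (rule linearI)
  fix x y c
  have "limitin mtopology (\<lambda>n. f n (x + y)) (g x + g y) sequentially"
    using limitin_add[OF lim lim] by (simp add: linear_add[OF lin])
  then show "g (x + y) = g x + g y"
    using limitin_metric_unique[OF lim] by simp
  have "limitin mtopology (\<lambda>n. f n (c *\<^sub>R x)) (c *\<^sub>R g x) sequentially"
    using limitin_scaleR[OF lim] by (simp add: linear_scale[OF lin])
  then show "g (c *\<^sub>R x) = c *\<^sub>R g x"
    using limitin_metric_unique[OF lim] by simp
qed

end

locale PN_pair = V: PN_space \<nu> + W: PN_space \<mu>
  for \<nu> :: "'v::real_vector \<Rightarrow> real \<Rightarrow> real" and \<mu> :: "'w::real_vector \<Rightarrow> real \<Rightarrow> real"
begin

lemma strong_continuous_iff_continuous_map: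
  "strong_continuous \<nu> \<mu> f \<longleftrightarrow> continuous_map V.mtopology W.mtopology f"
  by (simp add: strong_continuous_def continuous_map_def V.strong_open_iff_openin
      W.strong_open_iff_openin vimage_def)

lemma linear_continuous_map_iff:
  assumes "linear f"
  shows "continuous_map V.mtopology W.mtopology f \<longleftrightarrow>
    (\<forall>e>0. \<exists>\<delta>>0. \<forall>x. pn_gauge \<nu> x < \<delta> \<longrightarrow> pn_gauge \<mu> (f x) < e)"
    (is "_ \<longleftrightarrow> ?at_0")
proof -
  have "continuous_map V.mtopology W.mtopology f \<longleftrightarrow>
    (\<forall>a e. 0 < e \<longrightarrow> (\<exists>\<delta>>0. \<forall>x. pn_gauge \<nu> (a - x) < \<delta> \<longrightarrow> pn_gauge \<mu> (f (a - x)) < e))"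
    by (simp add: V.metric_continuous_map[OF W.Metric_space_axioms] linear_diff[OF assms])
  also have "\<dots> \<longleftrightarrow> ?at_0"
  proof
    assume at_all: "\<forall>a e. 0 < e \<longrightarrow>
      (\<exists>\<delta>>0. \<forall>x. pn_gauge \<nu> (a - x) < \<delta> \<longrightarrow> pn_gauge \<mu> (f (a - x)) < e)"
    show ?at_0
    proof (intro allI impI)
      fix e :: real assume "0 < e"
      then obtain \<delta> where "0 < \<delta>"
        and \<delta>: "\<And>x. pn_gauge \<nu> (0 - x) < \<delta> \<Longrightarrow> pn_gauge \<mu> (f (0 - x)) < e"
        using at_all by blast
      have "pn_gauge \<mu> (f x) < e" if "pn_gauge \<nu> x < \<delta>" for x
        using \<delta>[of "- x"] that by simp
      then show "\<exists>\<delta>>0. \<forall>x. pn_gauge \<nu> x < \<delta> \<longrightarrow> pn_gauge \<mu> (f x) < e"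
        using \<open>0 < \<delta>\<close> by blast
    qed
  qed blast
  finally show ?thesis .
qed

lemma closedin_uniformly_Cauchy_set:
  fixes f :: "nat \<Rightarrow> 'v \<Rightarrow> 'w"
  assumes "\<And>n. continuous_map V.mtopology W.mtopology (f n)"
  shows "closedin V.mtopology {x. \<forall>n k. N \<le> n \<longrightarrow> N \<le> k \<longrightarrow> pn_gauge \<mu> (f n x - f k x) \<le> r}"
proof -
  define C where "C n k = {x \<in> topspace V.mtopology. pn_gauge \<mu> (f n x - f k x) \<in> {..r}}" for n k
  have "closedin V.mtopology (C n k)" for n k
    unfolding C_def
  proof (rule closedin_continuous_map_preimage)
    show "continuous_map V.mtopology euclidean (\<lambda>x. pn_gauge \<mu> (f n x - f k x))"
      using continuous_map_mdist[of V.mtopology "metric (UNIV, \<lambda>p q. pn_gauge \<mu> (p - q))"]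
        assms by simp
  qed simp
  then have "closedin V.mtopology (\<Inter>(n, k)\<in>{N..} \<times> {N..}. C n k)"
    by (intro closedin_INT) auto
  moreover have "(\<Inter>(n, k)\<in>{N..} \<times> {N..}. C n k)
      = {x. \<forall>n k. N \<le> n \<longrightarrow> N \<le> k \<longrightarrow> pn_gauge \<mu> (f n x - f k x) \<le> r}"
    by (auto simp: C_def)
  ultimately show ?thesis by simp
qed

lemma uniformly_Cauchy_on_mball:
  fixes f :: "nat \<Rightarrow> 'v \<Rightarrow> 'w"
  assumes "V.mcomplete"
    and cont: "\<And>n. continuous_map V.mtopology W.mtopology (f n)"
    and lim: "\<And>x. limitin W.mtopology (\<lambda>n. f n x) (g x) sequentially"
    and "0 < r"
  obtains N x0 \<rho> where "0 < \<rho>"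
    and "\<And>y n k. y \<in> V.mball x0 \<rho> \<Longrightarrow> N \<le> n \<Longrightarrow> N \<le> k \<Longrightarrow> pn_gauge \<mu> (f n y - f k y) \<le> r"
proof -
  define A where "A N = {x. \<forall>n k. N \<le> n \<longrightarrow> N \<le> k \<longrightarrow> pn_gauge \<mu> (f n x - f k x) \<le> r}" for N
  have "\<exists>N. x \<in> A N" for x
  proof -
    have "\<forall>\<^sub>F n in sequentially. pn_gauge \<mu> (f n x - g x) < r / 2"
      using lim[of x, unfolded W.limitin_metric, THEN conjunct2, rule_format, of "r / 2"] \<open>0 < r\<close>
      by simp
    then obtain N where N: "\<And>n. N \<le> n \<Longrightarrow> pn_gauge \<mu> (f n x - g x) < r / 2"
      by (auto simp: eventually_sequentially)
    have "pn_gauge \<mu> (f n x - f k x) \<le> r" if "N \<le> n" "N \<le> k" for n k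
      using W.triangle[of "f n x" "g x" "f k x"] W.commute[of "g x" "f k x"]
        N[OF that(1)] N[OF that(2)] by simp
    then show ?thesis unfolding A_def by blast
  qed
  then have "(\<Union>N. A N) = topspace V.mtopology"
    by auto
  then have "V.mtopology interior_of (\<Union>N. A N) \<noteq> {}"
    by (simp only: interior_of_topspace) (simp add: V.topspace_mtopology)
  moreover have "V.mtopology interior_of (\<Union>N. A N) = {}" if "\<And>N. V.mtopology interior_of A N = {}"
    using closedin_uniformly_Cauchy_set[OF cont] that
    by (intro V.metric_Baire_category_alt[OF \<open>V.mcomplete\<close>]) (auto simp: A_def)
  ultimately obtain N where "V.mtopology interior_of A N \<noteq> {}"
    by blast
  then obtain x0 \<rho> where \<rho>: "0 < \<rho>" and ball: "V.mball x0 \<rho> \<subseteq> A N"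
    by (auto simp: V.in_interior_of_mball)
  show ?thesis
  proof (rule that[OF \<rho>])
    fix y n k assume "y \<in> V.mball x0 \<rho>" "N \<le> n" "N \<le> k"
    then show "pn_gauge \<mu> (f n y - f k y) \<le> r" using ball by (auto simp: A_def)
  qed
qed

lemma continuous_map_pointwise_limit:
  fixes f :: "nat \<Rightarrow> 'v \<Rightarrow> 'w"
  assumes "V.mcomplete"
    and lin: "\<And>n. linear (f n)"
    and cont: "\<And>n. continuous_map V.mtopology W.mtopology (f n)"
    and lim: "\<And>x. limitin W.mtopology (\<lambda>n. f n x) (g x) sequentially"
  shows "continuous_map V.mtopology W.mtopology g"
proof -
  have "linear g" using lin lim by (rule W.linear_pointwise_limit)
  show ?thesis unfolding linear_continuous_map_iff[OF \<open>linear g\<close>]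
  proof (intro allI impI)
    fix e :: real assume "0 < e"
    define r where "r = e / 4"
    have "0 < r" using \<open>0 < e\<close> by (simp add: r_def)
    obtain N x0 \<rho> where "0 < \<rho>" and close:
      "\<And>y n k. y \<in> V.mball x0 \<rho> \<Longrightarrow> N \<le> n \<Longrightarrow> N \<le> k \<Longrightarrow> pn_gauge \<mu> (f n y - f k y) \<le> r"
      using uniformly_Cauchy_on_mball[OF assms(1) cont lim \<open>0 < r\<close>] by metis
    have close_0: "pn_gauge \<mu> (f n y - f N y) \<le> 2 * r" if "pn_gauge \<nu> y < \<rho>" "N \<le> n" for y n
    proof -
      have "x0 + y \<in> V.mball x0 \<rho>" "x0 \<in> V.mball x0 \<rho>"
        using that(1) \<open>0 < \<rho>\<close> by (simp_all add: V.gauge_minus)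
      then have "pn_gauge \<mu> (f n (x0 + y) - f N (x0 + y)) \<le> r"
        and "pn_gauge \<mu> (f n x0 - f N x0) \<le> r"
        using close that(2) by blast+
      moreover have "f n y - f N y = (f n (x0 + y) - f N (x0 + y)) - (f n x0 - f N x0)"
        by (simp add: linear_add[OF lin] algebra_simps)
      then have "pn_gauge \<mu> (f n y - f N y)
          \<le> pn_gauge \<mu> (f n (x0 + y) - f N (x0 + y)) + pn_gauge \<mu> (f n x0 - f N x0)"
        by (metis W.gauge_diff)
      ultimately show ?thesis by linarith
    qed
    obtain \<delta> where "0 < \<delta>" and \<delta>: "\<And>y. pn_gauge \<nu> y < \<delta> \<Longrightarrow> pn_gauge \<mu> (f N y) < r"
      using cont[of N] \<open>0 < r\<close> unfolding linear_continuous_map_iff[OF lin] by blast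
    have "pn_gauge \<mu> (g y) < e" if y: "pn_gauge \<nu> y < min \<rho> \<delta>" for y
    proof -
      have "\<forall>\<^sub>F n in sequentially. pn_gauge \<mu> (f n y - g y) < r \<and> N \<le> n"
        using lim[of y] \<open>0 < r\<close>
        by (auto simp: W.limitin_metric intro: eventually_conj eventually_ge_at_top)
      then obtain n where n: "pn_gauge \<mu> (f n y - g y) < r" "N \<le> n"
        using eventually_happens'[OF sequentially_bot] by blast
      have "pn_gauge \<mu> (g y)
          \<le> pn_gauge \<mu> (g y - f n y) + pn_gauge \<mu> (f n y - f N y) + pn_gauge \<mu> (f N y)"
        using W.gauge_add[of "g y - f n y" "f n y - f N y"] W.gauge_add[of "g y - f N y" "f N y"]
        by simp
      also have "\<dots> < r + 2 * r + r"
        using n close_0[of y n] \<delta>[of y] y W.gauge_minus_commute[of "g y"] by fastforce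
      finally show ?thesis by (simp add: r_def)
    qed
    then show "\<exists>\<delta>>0. \<forall>y. pn_gauge \<nu> y < \<delta> \<longrightarrow> pn_gauge \<mu> (g y) < e"
      using \<open>0 < \<rho>\<close> \<open>0 < \<delta>\<close> by (intro exI[of _ "min \<rho> \<delta>"]) auto
  qed
qed

end

theorem theorem4p12:
  fixes \<nu> :: "'v::real_vector \<Rightarrow> real \<Rightarrow> real"
    and \<mu> :: "'w::real_vector \<Rightarrow> real \<Rightarrow> real"
    and Ts :: "nat \<Rightarrow> 'v \<Rightarrow> 'w"
    and T :: "'v \<Rightarrow> 'w"
  assumes "pn_space \<nu>" and "strongly_complete \<nu>"
    and "pn_space \<mu>"
    and "\<And>n. Ts n \<in> bounded_ops \<nu> \<mu>"
    and "\<And>x. strong_conv \<mu> (\<lambda>n. Ts n x) (T x)"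
  shows "linear T \<and> T \<in> bounded_ops \<nu> \<mu>"
proof -
  interpret PN_pair \<nu> \<mu>
    using assms(1,3) by (simp add: PN_pair_def PN_space_def)
  have lin: "linear (Ts n)" and cont: "continuous_map V.mtopology W.mtopology (Ts n)" for n
    using assms(4)[of n] by (simp_all add: bounded_ops_def strong_continuous_iff_continuous_map)
  have lim: "limitin W.mtopology (\<lambda>n. Ts n x) (T x) sequentially" for x
    using assms(5)[of x] by (simp add: W.strong_conv_iff_limitin)
  have "linear T"
    using lin lim by (rule W.linear_pointwise_limit)
  moreover have "strong_continuous \<nu> \<mu> T"
    using continuous_map_pointwise_limit[OF V.mcomplete_if_strongly_complete[OF assms(2)]
        lin cont lim]
    by (simp add: strong_continuous_iff_continuous_map)
  ultimately show ?thesis by (simp add: bounded_ops_def)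
qed

end
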